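(* Let $a\in\mathbb{D}$ and $\mathcal{T}\in\{\mathbb{T},\{a\}\}$. The set $K_0=\{(z_0,\eta_0,w_0)\in X_{\mathcal{T}}:\eta_0\notin\widehat{\mathrm{id}}^{-1}(z_0)\}$ is dense in $X_{\mathcal{T}}=\mathcal{T}\times\partial\widehat{H^\infty}\times\mathbb{T}$.
   Context: $\mathbb{D}$ is the open unit disc and $\mathbb{T}$ the unit circle. $H^\infty$ is the Banach algebra of bounded analytic functions on $\mathbb{D}$, $\mathcal{M}$ its maximal ideal space with the Gelfand (weak* ) topology (with $\mathbb{D}\subset\mathcal{M}$ via point evaluations), $\widehat{H^\infty}\subset C(\mathcal{M})$ the algebra of Gelfand transforms, and $\partial\widehat{H^\infty}$ its Shilov boundary. $\mathrm{id}$ is the identity function on $\mathbb{D}$ and $\widehat{\mathrm{id}}\colon\mathcal{M}\to\overline{\mathbb{D}}$ its Gelfand transform. $X_{\mathcal{T}}$ carries the product topology. *)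

theory Defs
  imports "HOL-Analysis.Analysis"
begin

text \<open>H-infinity: bounded holomorphic functions on the open unit disc. Each function
  is represented canonically by its values on the disc, extended by 0 outside.\<close>
definition Hinf :: "(complex \<Rightarrow> complex) set" where
  "Hinf = {f. f holomorphic_on ball 0 1 \<and> bounded (f ` ball 0 1)
              \<and> (\<forall>z. z \<notin> ball 0 1 \<longrightarrow> f z = 0)}"

definition one_D :: "complex \<Rightarrow> complex" where
  "one_D = (\<lambda>z. if z \<in> ball 0 1 then 1 else 0)"

definition id_D :: "complex \<Rightarrow> complex" where
  "id_D = (\<lambda>z. if z \<in> ball 0 1 then z else 0)"

text \<open>The weak* (Gelfand) topology is
  the subspace topology of the product topology on functionals.\<close>
definition MIS :: "((complex \<Rightarrow> complex) \<Rightarrow> complex) set" where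
  "MIS = {\<phi>. (\<forall>f\<in>Hinf. \<forall>g\<in>Hinf. \<phi> (\<lambda>z. f z + g z) = \<phi> f + \<phi> g)
            \<and> (\<forall>f\<in>Hinf. \<forall>c. \<phi> (\<lambda>z. c * f z) = c * \<phi> f)
            \<and> (\<forall>f\<in>Hinf. \<forall>g\<in>Hinf. \<phi> (\<lambda>z. f z * g z) = \<phi> f * \<phi> g)
            \<and> \<phi> one_D = 1
            \<and> (\<forall>f. f \<notin> Hinf \<longrightarrow> \<phi> f = 0)}"

text \<open>Gelfand transform of f evaluated at \<phi> is \<phi> f. A boundary of the algebra of
  Gelfand transforms: a closed subset of MIS on which every |f^| attains its maximum.\<close>
definition closed_boundary :: "((complex \<Rightarrow> complex) \<Rightarrow> complex) set \<Rightarrow> bool" where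
  "closed_boundary B \<longleftrightarrow> B \<subseteq> MIS \<and> closedin (top_of_set MIS) B \<and>
     (\<forall>f\<in>Hinf. \<exists>\<phi>\<in>B. \<forall>\<psi>\<in>MIS. norm (\<psi> f) \<le> norm (\<phi> f))"

definition shilov :: "((complex \<Rightarrow> complex) \<Rightarrow> complex) set" where
  "shilov = MIS \<inter> \<Inter> {B. closed_boundary B}"

end

theory Submission
  imports Defs "HOL-Complex_Analysis.Complex_Analysis"
begin

(* For T = the circle, the circle has no isolated points, so z0 can be moved along it away from
   eta0(id). For T = {a} the point is that |eta(id)| = 1 on the Shilov boundary: a character phi
   with b = phi(id) in the disc is evaluation at b (since f - f(b) = (z - b) g with g in H-infinity),
   so by the maximum modulus principle |f^| can be maximal at phi only for constant f. Hence
   removing such characters from a closed boundary leaves a closed boundary, and for T = {a} every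
   point of X_T already lies in K0. The Shilov boundary is an intersection of closed boundaries; if
   there were none it would be the whole maximal ideal space, and then evaluation at a is a limit
   of evaluations at nearby points of the disc. *)

lemma HinfI:
  assumes "f holomorphic_on ball 0 1" "\<And>z. z \<in> ball 0 1 \<Longrightarrow> norm (f z) \<le> M"
    and "\<And>z. z \<notin> ball 0 1 \<Longrightarrow> f z = 0"
  shows "f \<in> Hinf"
  using assms unfolding Hinf_def bounded_iff by blast

lemma Hinf_holomorphic: "f \<in> Hinf \<Longrightarrow> f holomorphic_on ball 0 1"
  by (simp add: Hinf_def)

lemma Hinf_outside: "f \<in> Hinf \<Longrightarrow> z \<notin> ball 0 1 \<Longrightarrow> f z = 0"
  by (simp add: Hinf_def)

lemma Hinf_bounded:
  assumes "f \<in> Hinf"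
  obtains M where "\<And>z. z \<in> ball 0 1 \<Longrightarrow> norm (f z) \<le> M"
proof -
  have "bounded (f ` ball 0 1)"
    using assms by (simp add: Hinf_def)
  then show ?thesis
    using that unfolding bounded_iff by blast
qed

lemma Hinf_add: "f \<in> Hinf \<Longrightarrow> g \<in> Hinf \<Longrightarrow> (\<lambda>z. f z + g z) \<in> Hinf"
proof -
  assume f: "f \<in> Hinf" and g: "g \<in> Hinf"
  obtain M N where "\<And>z. z \<in> ball 0 1 \<Longrightarrow> norm (f z) \<le> M" "\<And>z. z \<in> ball 0 1 \<Longrightarrow> norm (g z) \<le> N"
    using Hinf_bounded f g by metis
  then show ?thesis
    using f g by (intro HinfI[where M = "M + N"] holomorphic_intros)
      (auto simp: Hinf_holomorphic Hinf_outside intro: norm_triangle_le add_mono)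
qed

lemma Hinf_mult: "f \<in> Hinf \<Longrightarrow> g \<in> Hinf \<Longrightarrow> (\<lambda>z. f z * g z) \<in> Hinf"
proof -
  assume f: "f \<in> Hinf" and g: "g \<in> Hinf"
  obtain M N where "\<And>z. z \<in> ball 0 1 \<Longrightarrow> norm (f z) \<le> M" "\<And>z. z \<in> ball 0 1 \<Longrightarrow> norm (g z) \<le> N"
    using Hinf_bounded f g by metis
  then show ?thesis
    using f g by (intro HinfI[where M = "M * N"] holomorphic_intros)
      (auto simp: Hinf_holomorphic Hinf_outside norm_mult
        intro: mult_mono order_trans[OF norm_ge_zero])
qed

lemma Hinf_const: "(\<lambda>z. c * one_D z) \<in> Hinf"
proof (rule HinfI[where M = "norm c"])
  show "(\<lambda>z. c * one_D z) holomorphic_on ball 0 1"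
    by (rule holomorphic_transform[of "\<lambda>z. c"]) (auto simp: one_D_def)
qed (auto simp: one_D_def)

lemma one_D_Hinf: "one_D \<in> Hinf"
  using Hinf_const[of 1] by simp

lemma id_D_Hinf: "id_D \<in> Hinf"
proof (rule HinfI[where M = 1])
  show "id_D holomorphic_on ball 0 1"
    by (rule holomorphic_transform[of "\<lambda>z. z"]) (auto simp: id_D_def)
qed (auto simp: id_D_def)

lemma Hinf_cmult: "f \<in> Hinf \<Longrightarrow> (\<lambda>z. c * f z) \<in> Hinf"
proof -
  assume f: "f \<in> Hinf"
  have "(\<lambda>z. c * one_D z * f z) = (\<lambda>z. c * f z)"
    using f by (auto simp: fun_eq_iff one_D_def Hinf_outside)
  then show ?thesis
    using Hinf_mult[OF Hinf_const[of c] f] by simp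
qed

lemma Hinf_divided_difference:
  assumes f: "f \<in> Hinf" and b: "b \<in> ball 0 1"
  obtains g where "g \<in> Hinf" "f = (\<lambda>z. f b * one_D z + (id_D z + (- b) * one_D z) * g z)"
proof
  define g where "g = (\<lambda>z. if z \<in> ball 0 1 then
                            (if z = b then deriv f b else (f z - f b) / (z - b)) else 0)"
  have "(\<lambda>z. if z = b then deriv f b else (f z - f b) / (z - b)) holomorphic_on ball 0 1"
    by (rule pole_lemma_open[OF Hinf_holomorphic[OF f]]) auto
  then have hol: "g holomorphic_on ball 0 1"
    by (rule holomorphic_transform) (auto simp: g_def)
  obtain M where M: "\<And>z. z \<in> ball 0 1 \<Longrightarrow> norm (f z) \<le> M"
    using Hinf_bounded[OF f] by blast
  define \<delta> where "\<delta> = (1 - norm b) / 2"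
  \<comment> \<open>g is continuous on the compact set cball b \<delta>; off it, the denominator is at least \<delta>.\<close>
  have \<delta>: "\<delta> > 0" and near: "cball b \<delta> \<subseteq> ball 0 1"
    using b by (auto simp: \<delta>_def cball_subset_ball_iff field_simps)
  have "compact (g ` cball b \<delta>)"
    using near by (intro compact_continuous_image continuous_on_subset[OF
        holomorphic_on_imp_continuous_on[OF hol]]) auto
  then obtain K where K: "\<And>z. z \<in> cball b \<delta> \<Longrightarrow> norm (g z) \<le> K"
    by (meson compact_imp_bounded bounded_iff image_eqI)
  have far: "norm (g z) \<le> 2 * M / \<delta>" if z: "z \<in> ball 0 1" "z \<notin> cball b \<delta>" for z
  proof -
    have "norm (f z - f b) \<le> 2 * M"
      using M[OF z(1)] M[OF b] norm_triangle_ineq4[of "f z" "f b"] by linarith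
    moreover have "\<delta> \<le> norm (z - b)"
      using z(2) by (auto simp: dist_norm norm_minus_commute)
    moreover have "0 \<le> M"
      using M[OF b] norm_ge_zero[of "f b"] by linarith
    ultimately show ?thesis
      using z \<delta> by (auto simp: g_def norm_divide intro!: frac_le)
  qed
  show "g \<in> Hinf"
  proof (rule HinfI[OF hol, where M = "max K (2 * M / \<delta>)"])
    fix z :: complex assume "z \<in> ball 0 1"
    then show "norm (g z) \<le> max K (2 * M / \<delta>)"
      using K far by (cases "z \<in> cball b \<delta>") (auto simp: le_max_iff_disj)
  qed (simp add: g_def)
  show "f = (\<lambda>z. f b * one_D z + (id_D z + (- b) * one_D z) * g z)"
    using f by (auto simp: fun_eq_iff g_def one_D_def id_D_def Hinf_outside)
qed

lemma
  assumes "\<phi> \<in> MIS" and "f \<in> Hinf" and "g \<in> Hinf"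
  shows MIS_add: "\<phi> (\<lambda>z. f z + g z) = \<phi> f + \<phi> g"
    and MIS_mult: "\<phi> (\<lambda>z. f z * g z) = \<phi> f * \<phi> g"
  using assms by (simp_all add: MIS_def)

lemma MIS_cmult: "\<phi> \<in> MIS \<Longrightarrow> f \<in> Hinf \<Longrightarrow> \<phi> (\<lambda>z. c * f z) = c * \<phi> f"
  by (simp add: MIS_def)

lemma MIS_one: "\<phi> \<in> MIS \<Longrightarrow> \<phi> one_D = 1"
  by (simp add: MIS_def)

lemma MIS_outside: "\<phi> \<in> MIS \<Longrightarrow> f \<notin> Hinf \<Longrightarrow> \<phi> f = 0"
  by (simp add: MIS_def)

(* Zero off Hinf, as required of elements of MIS. *)
definition point_eval :: "complex \<Rightarrow> (complex \<Rightarrow> complex) \<Rightarrow> complex" where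
  "point_eval b = (\<lambda>f. if f \<in> Hinf then f b else 0)"

lemma point_eval_apply: "f \<in> Hinf \<Longrightarrow> point_eval b f = f b"
  by (simp add: point_eval_def)

lemma point_eval_id_D: "b \<in> ball 0 1 \<Longrightarrow> point_eval b id_D = b"
  using point_eval_apply[OF id_D_Hinf, of b] by (simp add: id_D_def)

lemma point_eval_MIS: "b \<in> ball 0 1 \<Longrightarrow> point_eval b \<in> MIS"
  unfolding MIS_def point_eval_def
  using Hinf_add Hinf_mult Hinf_cmult one_D_Hinf by (auto simp: one_D_def)

lemma MIS_apply_eq:
  assumes \<phi>: "\<phi> \<in> MIS" and b: "b \<in> ball 0 1" "\<phi> id_D = b" and f: "f \<in> Hinf"
  shows "\<phi> f = f b"
proof -
  obtain g where g: "g \<in> Hinf" and fg: "f = (\<lambda>z. f b * one_D z + (id_D z + (- b) * one_D z) * g z)"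
    using Hinf_divided_difference[OF f b(1)] .
  have "\<phi> f = \<phi> (\<lambda>z. f b * one_D z + (id_D z + (- b) * one_D z) * g z)"
    by (rule arg_cong[OF fg])
  also have "\<dots> = f b * \<phi> one_D + (\<phi> id_D + (- b) * \<phi> one_D) * \<phi> g"
    by (simp only: MIS_add[OF \<phi>] MIS_mult[OF \<phi>] MIS_cmult[OF \<phi>] Hinf_add Hinf_mult Hinf_cmult
        one_D_Hinf id_D_Hinf g)
  finally show ?thesis
    using b MIS_one[OF \<phi>] by simp
qed

lemma MIS_eq_point_eval:
  assumes "\<phi> \<in> MIS" "b \<in> ball 0 1" "\<phi> id_D = b"
  shows "\<phi> = point_eval b"
proof
  fix f show "\<phi> f = point_eval b f"
    using assms MIS_apply_eq MIS_outside by (cases "f \<in> Hinf") (auto simp: point_eval_def)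
qed

lemma MIS_apply_constant:
  assumes "f \<in> Hinf" "f constant_on ball 0 1" "\<phi> \<in> MIS" "\<psi> \<in> MIS"
  shows "\<phi> f = \<psi> f"
proof -
  obtain c where "\<forall>z\<in>ball 0 1. f z = c"
    using assms(2) by (auto simp: constant_on_def)
  then have "f = (\<lambda>z. c * one_D z)"
    using assms(1) by (auto simp: fun_eq_iff one_D_def Hinf_outside)
  then show ?thesis
    using assms(3,4) one_D_Hinf by (simp add: MIS_cmult MIS_one)
qed

lemma MIS_maximiser_in_disc_imp_constant:
  assumes \<phi>: "\<phi> \<in> MIS" "norm (\<phi> id_D) < 1" and f: "f \<in> Hinf"
    and max: "\<forall>\<psi>\<in>MIS. norm (\<psi> f) \<le> norm (\<phi> f)"
  shows "f constant_on ball 0 1"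
proof -
  define b where "b = \<phi> id_D"
  have b: "b \<in> ball 0 1"
    using \<phi>(2) by (simp add: b_def)
  have "norm (f z) \<le> norm (f b)" if "z \<in> ball 0 1" for z
  proof -
    have "norm (point_eval z f) \<le> norm (\<phi> f)"
      using max point_eval_MIS[OF that] by blast
    then show ?thesis
      by (simp add: point_eval_apply f MIS_apply_eq[OF \<phi>(1) b b_def[symmetric] f])
  qed
  then show ?thesis
    using b by (intro maximum_modulus_principle[OF Hinf_holomorphic[OF f], of "ball 0 1" b]) auto
qed

lemma id_D_not_constant: "\<not> id_D constant_on ball 0 1"
proof
  assume "id_D constant_on ball 0 1"
  moreover have "0 \<in> ball (0::complex) 1" "1/2 \<in> ball (0::complex) 1"
    by (auto simp: norm_divide)
  ultimately have "id_D 0 = id_D (1/2)"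
    unfolding constant_on_def by metis
  then show False
    by (simp add: id_D_def)
qed

lemma closed_boundary_meets_circle:
  assumes "closed_boundary B"
  obtains \<phi> where "\<phi> \<in> B" "1 \<le> norm (\<phi> id_D)"
proof -
  obtain \<phi> where \<phi>: "\<phi> \<in> B" "\<forall>\<psi>\<in>MIS. norm (\<psi> id_D) \<le> norm (\<phi> id_D)"
    using assms id_D_Hinf unfolding closed_boundary_def by blast
  have "\<phi> \<in> MIS"
    using assms \<phi>(1) by (auto simp: closed_boundary_def)
  have "1 \<le> norm (\<phi> id_D)"
  proof (rule ccontr)
    assume "\<not> 1 \<le> norm (\<phi> id_D)"
    then have "id_D constant_on ball 0 1"
      using MIS_maximiser_in_disc_imp_constant[of \<phi> id_D] \<open>\<phi> \<in> MIS\<close> id_D_Hinf \<phi>(2) by simp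
    then show False
      using id_D_not_constant by blast
  qed
  then show ?thesis
    using that \<phi>(1) by blast
qed

lemma closed_boundary_restrict_circle:
  assumes B: "closed_boundary B"
  shows "closed_boundary (B \<inter> {\<phi>. 1 \<le> norm (\<phi> id_D)})"
proof -
  have BM: "B \<subseteq> MIS" "closedin (top_of_set MIS) B"
    using B by (auto simp: closed_boundary_def)
  have "closed {\<phi>::(complex \<Rightarrow> complex) \<Rightarrow> complex. 1 \<le> norm (\<phi> id_D)}"
    by (intro closed_Collect_le continuous_on_const continuous_on_norm
        continuous_on_product_coordinates)
  then have "closedin (top_of_set MIS) (B \<inter> (MIS \<inter> {\<phi>. 1 \<le> norm (\<phi> id_D)}))"
    by (intro closedin_Int[OF BM(2)] closedin_closed_Int)
  moreover have "B \<inter> (MIS \<inter> {\<phi>. 1 \<le> norm (\<phi> id_D)}) = B \<inter> {\<phi>. 1 \<le> norm (\<phi> id_D)}"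
    using BM(1) by blast
  ultimately have closed: "closedin (top_of_set MIS) (B \<inter> {\<phi>. 1 \<le> norm (\<phi> id_D)})"
    by simp
  obtain \<phi>1 where \<phi>1: "\<phi>1 \<in> B" "1 \<le> norm (\<phi>1 id_D)"
    using closed_boundary_meets_circle[OF B] .
  have "\<exists>\<phi>\<in>B \<inter> {\<phi>. 1 \<le> norm (\<phi> id_D)}. \<forall>\<psi>\<in>MIS. norm (\<psi> f) \<le> norm (\<phi> f)"
    if f: "f \<in> Hinf" for f
  proof -
    obtain \<phi> where \<phi>: "\<phi> \<in> B" "\<forall>\<psi>\<in>MIS. norm (\<psi> f) \<le> norm (\<phi> f)"
      using B f unfolding closed_boundary_def by blast
    show ?thesis
    proof (cases "1 \<le> norm (\<phi> id_D)")
      case True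
      then show ?thesis using \<phi> by blast
    next
      case False
      moreover have "\<phi> \<in> MIS"
        using \<phi>(1) BM(1) by blast
      ultimately have "f constant_on ball 0 1"
        using MIS_maximiser_in_disc_imp_constant[of \<phi> f] f \<phi>(2) by simp
      then have "\<phi> f = \<phi>1 f"
        using MIS_apply_constant[OF f] \<open>\<phi> \<in> MIS\<close> \<phi>1(1) BM(1) by blast
      then show ?thesis
        using \<phi>1 \<phi>(2) by auto
    qed
  qed
  then show ?thesis
    using closed BM(1) by (auto simp: closed_boundary_def)
qed

lemma shilov_norm_id_D:
  assumes "closed_boundary B" "\<eta> \<in> shilov"
  shows "1 \<le> norm (\<eta> id_D)"
  using assms closed_boundary_restrict_circle unfolding shilov_def by blast

lemma continuous_on_point_eval: "continuous_on (ball 0 1) point_eval"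
proof (rule continuous_on_coordinatewise_then_product)
  fix f :: "complex \<Rightarrow> complex"
  show "continuous_on (ball 0 1) (\<lambda>b. point_eval b f)"
    by (cases "f \<in> Hinf")
      (simp_all add: point_eval_def holomorphic_on_imp_continuous_on Hinf_holomorphic)
qed

lemma islimpt_imp_closure_remove:
  fixes x :: "'a::t1_space"
  assumes "x islimpt S"
  shows "x \<in> closure (S - {c})"
proof -
  have "x islimpt insert c (S - {c})"
    using assms by (rule islimpt_subset) auto
  then have "x islimpt S - {c}"
    by (simp only: islimpt_insert)
  then show ?thesis
    by (simp add: closure_def)
qed

lemma point_eval_in_closure_punctured:
  assumes b: "b \<in> ball 0 1"
  shows "point_eval b \<in> closure (point_eval ` (ball 0 1 - {b}))"
proof -
  define r where "r = (1 - norm b) / 2"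
  have r: "0 < r" "cball b r \<subseteq> ball 0 1"
    using b by (auto simp: r_def cball_subset_ball_iff field_simps)
  have b_closure: "b \<in> closure (ball b r - {b})"
    using r(1) by (intro islimpt_imp_closure_remove islimpt_ball[THEN iffD2]) auto
  have "closure (ball b r - {b}) \<subseteq> cball b r"
    by (rule closure_minimal) auto
  then have "point_eval ` closure (ball b r - {b}) \<subseteq> closure (point_eval ` (ball b r - {b}))"
    using r(2) by (intro continuous_image_closure_subset[OF continuous_on_point_eval]) auto
  moreover have "point_eval ` (ball b r - {b}) \<subseteq> point_eval ` (ball 0 1 - {b})"
    using r(2) ball_subset_cball[of b r] by blast
  ultimately show ?thesis
    using b_closure closure_mono by blast
qed

(* In fact MIS is itself a closed boundary, so this never applies; the definition of shilov does
   not exclude it, however. *)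
lemma shilov_eq_MIS_if_norm_id_D_lt_1:
  assumes "\<eta> \<in> shilov" "norm (\<eta> id_D) < 1"
  shows "shilov = MIS"
proof -
  have "\<not> closed_boundary B" for B
    using shilov_norm_id_D[of B \<eta>] assms by linarith
  then show ?thesis
    by (simp add: shilov_def)
qed

lemma islimpt_sphere:
  fixes x c :: "'a::euclidean_space"
  assumes "2 \<le> DIM('a)" "0 < r" "x \<in> sphere c r"
  shows "x islimpt sphere c r"
proof (rule connected_imp_perfect[OF connected_sphere[OF assms(1)] assms(3)])
  fix y show "sphere c r \<noteq> {y}"
  proof
    assume "sphere c r = {y}"
    moreover have "c + (c - x) \<in> sphere c r"
      using assms(3) by (simp add: dist_norm norm_minus_commute)
    ultimately have "c + (c - x) = x"
      using assms(3) by auto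
    then have "x = c"
      by (simp add: algebra_simps scaleR_2[symmetric])
    then show False
      using assms(2,3) by simp
  qed
qed

lemma closure_Times_mono:
  assumes "x \<in> closure A" "y \<in> closure B" "A \<times> B \<subseteq> S"
  shows "(x, y) \<in> closure S"
  using assms closure_mono[OF assms(3)] by (auto simp: closure_Times)

theorem lemma2p7:
  fixes a :: complex and \<T> :: "complex set"
  assumes "a \<in> ball 0 1"
    and "\<T> = sphere 0 1 \<or> \<T> = {a}"
  shows "\<T> \<times> shilov \<times> sphere (0::complex) 1 \<subseteq>
           closure {(z0, \<eta>0, w0). (z0, \<eta>0, w0) \<in> \<T> \<times> shilov \<times> sphere (0::complex) 1
                                   \<and> \<eta>0 id_D \<noteq> z0}"
proof
  fix x assume "x \<in> \<T> \<times> shilov \<times> sphere (0::complex) 1"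
  then obtain z0 \<eta> w0 where x: "x = (z0, \<eta>, w0)" "z0 \<in> \<T>" "\<eta> \<in> shilov" "w0 \<in> sphere 0 1"
    by auto
  let ?K0 = "{(z0, \<eta>0, w0). (z0, \<eta>0, w0) \<in> \<T> \<times> shilov \<times> sphere (0::complex) 1 \<and> \<eta>0 id_D \<noteq> z0}"
  have in_closure: "y \<in> closure {y}" for y :: "'b::topological_space"
    using closure_subset by blast
  from assms(2) show "x \<in> closure ?K0"
  proof
    assume T: "\<T> = sphere 0 1"
    have "z0 \<in> closure (sphere 0 1 - {\<eta> id_D})"
      using x T by (intro islimpt_imp_closure_remove islimpt_sphere) auto
    moreover have "(sphere 0 1 - {\<eta> id_D}) \<times> {\<eta>} \<times> {w0} \<subseteq> ?K0"
      using T x by auto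
    ultimately show ?thesis
      using x closure_Times_mono[OF _ closure_Times_mono[OF in_closure in_closure order.refl]] by simp
  next
    assume T: "\<T> = {a}"
    show ?thesis
    proof (cases "\<eta> id_D = a")
      case False
      then show ?thesis
        using x T closure_subset by fastforce
    next
      case True
      then have shilov: "shilov = MIS"
        using shilov_eq_MIS_if_norm_id_D_lt_1 x assms(1) by auto
      then have "\<eta> = point_eval a"
        using MIS_eq_point_eval[of \<eta> a] assms(1) x True by simp
      then have "\<eta> \<in> closure (point_eval ` (ball 0 1 - {a}))"
        using point_eval_in_closure_punctured[OF assms(1)] by simp
      moreover have "{a} \<times> point_eval ` (ball 0 1 - {a}) \<times> {w0} \<subseteq> ?K0"
        using T x shilov point_eval_MIS point_eval_id_D by auto
      ultimately show ?thesis
        using x T closure_Times_mono[OF in_closure closure_Times_mono[OF _ in_closure order.refl]]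
        by simp
    qed
  qed
qed

end
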